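(* Let $Q$ and $W$ satisfy the standing assumptions with $W=Y$, and let $l\ge1$. Then $\mathcal B(\hat Q^{l\triangledown})\subseteq\hat{\mathcal B}^l$.
   Context: Strings and signals: $\diamond$ is a symbol not in any other set considered. For a set $A$ and $l\in\mathbb N_0$, $A^l$ is the set of strings of length $l$ over $A$, indexed $\zeta=\zeta(0)\cdots\zeta(l-1)$. For a map $w$ on $\mathbb Z$ (or a string) and integers $t_1\le t_2$, $w|_{[t_1,t_2]}=w(t_1)\cdots w(t_2)$ is the string of length $t_2-t_1+1$ (absolute time forgotten). For a set $\mathcal S$ of such maps, $\mathcal S|_{[t_1,t_2]}=\{s|_{[t_1,t_2]}:s\in\mathcal S\}$. State machines: a state machine is $Q=(X,U,Y,\delta,X_0)$ with $X_0\subseteq X$, $\delta\subseteq X\times U\times Y\times X$. Let $H_\delta(x)=\{y:\exists u,x'.\,(x,u,y,x')\in\delta\}$, $F_\delta(x,u)=\{x':\exists y\in H_\delta(x).\,(x,u,y,x')\in\delta\}$. The full behavior $\mathcal B_f(Q)$ is the set of $(\mu,\nu,\xi)\in(U\times Y\times X)^{\mathbb N_0}$ with $\xi(0)\in X_0$ and $(\xi(k),\mu(k),\nu(k),\xi(k+1))\in\delta$ for all $k\in\mathbb N_0$. $Q$ is live and reachable if every $x\in X_0$ is $\xi(0)$ for some $(\mu,\nu,\xi)\in\mathcal B_f(Q)$ and every $x\in X$ is $\xi(k)$ for some such trajectory and some $k$. Standing assumptions: $Q=(X,U,Y,\delta,X_0)$ is live and reachable and satisfies $(x,u,y,x')\in\delta\iff(x'\in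 F_\delta(x,u)\wedge y\in H_\delta(x))$ for all $x,x'\in X,u\in U,y\in Y$; the external signal space $W$ is finite and either $W=U\times Y$ or $W=Y$ (here $W=Y$, with $\pi_Y(u,y)=y$). Behaviors: for a state machine $Q'$ with input set $U$ and output set $Y$, $\mathcal B(Q')$ is the set of $w:\mathbb Z\to Y\cup\{\diamond\}$ such that for some $(\mu,\nu,\xi)\in\mathcal B_f(Q')$, $w(k)=\diamond$ for $k<0$ and $w(k)=\nu(k)$ for $k\ge0$. $\mathcal B_S(Q)$ is the set of pairs $(w,\xi)$ of maps on $\mathbb Z$ with $w(k)=\xi(k)=\diamond$ for $k<0$ and $(w(k),\xi(k))=(\nu(k),\xi'(k))$ for $k\ge0$, for some $(\mu,\nu,\xi')\in\mathcal B_f(Q)$. For a set $\mathcal B$ of maps on $\mathbb Z$, $\Pi_l(\mathcal B)=\bigcup_{k\in\mathbb N_0}\mathcal B|_{[k-l+1,k]}$. SAlCA: for $l\in\mathbb N_0$, $\hat{\mathcal B}^l$ is the set of $w:\mathbb Z\to W\cup\{\diamond\}$ with $w(k)=\diamond$ for $k<0$, $w(k)\in W$ for $k\ge0$, $w|_{[-l,0]}\in\mathcal B(Q)|_{[-l,0]}$ and $w|_{[k-l,k]}\in\Pi_{l+1}(\mathcal B(Q))$ for all $k\in\mathbb N_0$. Corresponding strings: for integers $a,b$ and $x\in X$, $E^{[a,b]}(x)=\{\zeta:\exists(w,\xi)\in\mathcal B_S(Q),k\in\mathbb N_0:\ \xi(k)=x,\ \zeta=w|_{[k+a,k+b]}\}$;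 $I^l_l=[0,l-1]$. Quotient state machine (for $W=Y$): $\hat Q^{l\triangledown}=(\hat X^{l\triangledown},U,Y,\hat\delta^{l\triangledown},\hat X^{l\triangledown}_0)$ with $\hat X^{l\triangledown}=\{E^{I^l_l}(x):x\in X\}$ (a set of subsets of $Y^l$), $\hat X^{l\triangledown}_0=\{E^{I^l_l}(x):x\in X_0\}$, and $(\hat x,u,y,\hat x')\in\hat\delta^{l\triangledown}$ iff there exist $x,x'\in X$ with $\hat x=E^{I^l_l}(x)$, $\hat x'=E^{I^l_l}(x')$ and $(x,u,y,x')\in\delta$. *)

theory Defs
  imports Main
begin

text \<open>State machine Q = (X,U,Y,delta,X0). The symbol diamond is encoded as None
  (maps on Z take values in 'a option, Some v standing for v).\<close>

record ('x, 'u, 'y) state_machine =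
  St   :: "'x set"
  Inp  :: "'u set"
  Out  :: "'y set"
  Tr   :: "('x \<times> 'u \<times> 'y \<times> 'x) set"
  Init :: "'x set"

definition is_state_machine :: "('x, 'u, 'y) state_machine \<Rightarrow> bool" where
  "is_state_machine Q \<longleftrightarrow> Init Q \<subseteq> St Q \<and> Tr Q \<subseteq> St Q \<times> Inp Q \<times> Out Q \<times> St Q"

definition H_of :: "('x, 'u, 'y) state_machine \<Rightarrow> 'x \<Rightarrow> 'y set" where
  "H_of Q x = {y. \<exists>u x'. (x, u, y, x') \<in> Tr Q}"

definition F_of :: "('x, 'u, 'y) state_machine \<Rightarrow> 'x \<Rightarrow> 'u \<Rightarrow> 'x set" where
  "F_of Q x u = {x'. \<exists>y \<in> H_of Q x. (x, u, y, x') \<in> Tr Q}"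

definition full_behavior ::
  "('x, 'u, 'y) state_machine \<Rightarrow> ((nat \<Rightarrow> 'u) \<times> (nat \<Rightarrow> 'y) \<times> (nat \<Rightarrow> 'x)) set" where
  "full_behavior Q = {(\<mu>, \<nu>, \<xi>).
     (\<forall>k. \<mu> k \<in> Inp Q \<and> \<nu> k \<in> Out Q \<and> \<xi> k \<in> St Q) \<and>
     \<xi> 0 \<in> Init Q \<and> (\<forall>k. (\<xi> k, \<mu> k, \<nu> k, \<xi> (Suc k)) \<in> Tr Q)}"

definition live_reachable :: "('x, 'u, 'y) state_machine \<Rightarrow> bool" where
  "live_reachable Q \<longleftrightarrow>
     (\<forall>x \<in> Init Q. \<exists>\<mu> \<nu> \<xi>. (\<mu>, \<nu>, \<xi>) \<in> full_behavior Q \<and> \<xi> 0 = x) \<and>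
     (\<forall>x \<in> St Q. \<exists>\<mu> \<nu> \<xi> k. (\<mu>, \<nu>, \<xi>) \<in> full_behavior Q \<and> \<xi> k = x)"

definition standing_assumptions :: "('x, 'u, 'y) state_machine \<Rightarrow> bool" where
  "standing_assumptions Q \<longleftrightarrow> is_state_machine Q \<and> live_reachable Q \<and>
     (\<forall>x \<in> St Q. \<forall>x' \<in> St Q. \<forall>u \<in> Inp Q. \<forall>y \<in> Out Q.
        (x, u, y, x') \<in> Tr Q \<longleftrightarrow> (x' \<in> F_of Q x u \<and> y \<in> H_of Q x)) \<and>
     finite (Out Q)"

definition restr :: "(int \<Rightarrow> 'a) \<Rightarrow> int \<Rightarrow> int \<Rightarrow> 'a list" where
  "restr w t1 t2 = map w [t1..t2]"

definition restr_set :: "(int \<Rightarrow> 'a) set \<Rightarrow> int \<Rightarrow> int \<Rightarrow> 'a list set" where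
  "restr_set S t1 t2 = (\<lambda>s. restr s t1 t2) ` S"

definition behavior :: "('x, 'u, 'y) state_machine \<Rightarrow> (int \<Rightarrow> 'y option) set" where
  "behavior Q = {w. \<exists>\<mu> \<nu> \<xi>. (\<mu>, \<nu>, \<xi>) \<in> full_behavior Q \<and>
       (\<forall>k. w k = (if k < 0 then None else Some (\<nu> (nat k))))}"

definition behavior_S :: "('x, 'u, 'y) state_machine \<Rightarrow> ((int \<Rightarrow> 'y option) \<times> (int \<Rightarrow> 'x option)) set" where
  "behavior_S Q = {(w, \<xi>). \<exists>\<mu> \<nu> \<xi>'. (\<mu>, \<nu>, \<xi>') \<in> full_behavior Q \<and>
       (\<forall>k. w k = (if k < 0 then None else Some (\<nu> (nat k))) \<and>
            \<xi> k = (if k < 0 then None else Some (\<xi>' (nat k))))}"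

definition Pi_l :: "nat \<Rightarrow> (int \<Rightarrow> 'a) set \<Rightarrow> 'a list set" where
  "Pi_l l B = (\<Union>k::nat. restr_set B (int k - int l + 1) (int k))"

definition salca :: "('x, 'u, 'y) state_machine \<Rightarrow> nat \<Rightarrow> (int \<Rightarrow> 'y option) set" where
  "salca Q l = {w. (\<forall>k < 0. w k = None) \<and> (\<forall>k \<ge> 0. w k \<in> Some ` Out Q) \<and>
       restr w (- int l) 0 \<in> restr_set (behavior Q) (- int l) 0 \<and>
       (\<forall>k::nat. restr w (int k - int l) (int k) \<in> Pi_l (l + 1) (behavior Q))}"

definition E_str :: "('x, 'u, 'y) state_machine \<Rightarrow> int \<Rightarrow> int \<Rightarrow> 'x \<Rightarrow> 'y option list set" where
  "E_str Q a b x = {\<zeta>. \<exists>w \<xi> k. (w, \<xi>) \<in> behavior_S Q \<and> \<xi> (int k) = Some x \<and>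
        \<zeta> = restr w (int k + a) (int k + b)}"

definition E_l :: "('x, 'u, 'y) state_machine \<Rightarrow> nat \<Rightarrow> 'x \<Rightarrow> 'y option list set" where
  "E_l Q l x = E_str Q 0 (int l - 1) x"

definition quotient_sm ::
  "('x, 'u, 'y) state_machine \<Rightarrow> nat \<Rightarrow> ('y option list set, 'u, 'y) state_machine" where
  "quotient_sm Q l = \<lparr> St = E_l Q l ` St Q, Inp = Inp Q, Out = Out Q,
     Tr = {(xh, u, y, xh'). \<exists>x \<in> St Q. \<exists>x' \<in> St Q.
             xh = E_l Q l x \<and> xh' = E_l Q l x' \<and> (x, u, y, x') \<in> Tr Q},
     Init = E_l Q l ` Init Q \<rparr>"

end

theory Submission
  imports Defs
begin

text \<open>A state of the quotient machine is the set \<open>E_l Q l x\<close> of length-\<open>l\<close> output windows that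
  runs of \<open>Q\<close> can produce from a representative \<open>x\<close>. Hence every output string of length
  at most \<open>l\<close> that some representative can emit is emitted by all representatives of the
  same class. Walking a run of the quotient backwards, a transition \<open>x \<rightarrow> x'\<close> of \<open>Q\<close> between
  representatives lets us prepend one output letter: splice a run reaching \<open>x\<close> (reachability)
  with the run emitting the rest from \<open>x'\<close>. Thus every \<open>l+1\<close> consecutive outputs of the quotient
  occur in a behavior of \<open>Q\<close>, and its first \<open>l\<close> outputs are emitted from an initial state,
  which is what membership in the SAlCA asks for.\<close>

definition signal_of :: "(nat \<Rightarrow> 'a) \<Rightarrow> int \<Rightarrow> 'a option" where
  "signal_of \<nu> k = (if k < 0 then None else Some (\<nu> (nat k)))"

lemma behavior_iff:
  "w \<in> behavior Q \<longleftrightarrow> (\<exists>\<mu> \<nu> \<xi>. (\<mu>, \<nu>, \<xi>) \<in> full_behavior Q \<and> w = signal_of \<nu>)"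
  by (auto simp: behavior_def signal_of_def fun_eq_iff)

lemma behavior_S_iff:
  "(w, \<xi>o) \<in> behavior_S Q \<longleftrightarrow>
     (\<exists>\<mu> \<nu> \<xi>. (\<mu>, \<nu>, \<xi>) \<in> full_behavior Q \<and> w = signal_of \<nu> \<and> \<xi>o = signal_of \<xi>)"
  unfolding behavior_S_def signal_of_def fun_eq_iff by blast

lemma restr_cong: "(\<And>k. a \<le> k \<Longrightarrow> k \<le> b \<Longrightarrow> f k = g k) \<Longrightarrow> restr f a b = restr g a b"
  by (simp add: restr_def)

lemma restr_signal_of:
  "restr (signal_of \<nu>) (int i) (int i + (int n - 1)) = map (\<lambda>m. Some (\<nu> (i + m))) [0..<n]"
  by (rule nth_equalityI) (auto simp: restr_def nth_upto signal_of_def nat_add_distrib)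

definition can_emit :: "('x, 'u, 'y) state_machine \<Rightarrow> 'x \<Rightarrow> 'y list \<Rightarrow> bool" where
  "can_emit Q x s \<longleftrightarrow> (\<exists>\<mu> \<nu> \<xi> t. (\<mu>, \<nu>, \<xi>) \<in> full_behavior Q \<and> \<xi> t = x \<and>
     (\<forall>m < length s. \<nu> (t + m) = s ! m))"

lemma E_l_iff:
  "\<zeta> \<in> E_l Q l x \<longleftrightarrow> (\<exists>\<mu> \<nu> \<xi> k. (\<mu>, \<nu>, \<xi>) \<in> full_behavior Q \<and> \<xi> k = x \<and>
     \<zeta> = map (\<lambda>m. Some (\<nu> (k + m))) [0..<l])"
proof -
  have state: "signal_of \<xi> (int k) = Some x \<longleftrightarrow> \<xi> k = x" for \<xi> :: "nat \<Rightarrow> 'b" and k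
    by (simp add: signal_of_def)
  show ?thesis
  proof
    assume "\<zeta> \<in> E_l Q l x"
    then obtain w \<xi>o k where "(w, \<xi>o) \<in> behavior_S Q" and "\<xi>o (int k) = Some x"
      and \<zeta>: "\<zeta> = restr w (int k) (int k + (int l - 1))"
      unfolding E_l_def E_str_def by auto
    then obtain \<mu> \<nu> \<xi> where "(\<mu>, \<nu>, \<xi>) \<in> full_behavior Q" "\<xi> k = x" "w = signal_of \<nu>"
      unfolding behavior_S_iff using state by blast
    with \<zeta> restr_signal_of show "\<exists>\<mu> \<nu> \<xi> k. (\<mu>, \<nu>, \<xi>) \<in> full_behavior Q \<and> \<xi> k = x \<and>
        \<zeta> = map (\<lambda>m. Some (\<nu> (k + m))) [0..<l]" by blast
  next
    assume "\<exists>\<mu> \<nu> \<xi> k. (\<mu>, \<nu>, \<xi>) \<in> full_behavior Q \<and> \<xi> k = x \<and>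
        \<zeta> = map (\<lambda>m. Some (\<nu> (k + m))) [0..<l]"
    then obtain \<mu> \<nu> \<xi> k where "(\<mu>, \<nu>, \<xi>) \<in> full_behavior Q" "\<xi> k = x"
      "\<zeta> = map (\<lambda>m. Some (\<nu> (k + m))) [0..<l]" by blast
    moreover have "(signal_of \<nu>, signal_of \<xi>) \<in> behavior_S Q"
      using calculation(1) behavior_S_iff by blast
    ultimately show "\<zeta> \<in> E_l Q l x"
      unfolding E_l_def E_str_def mem_Collect_eq
      by (intro exI[of _ "signal_of \<nu>"] exI[of _ "signal_of \<xi>"] exI[of _ k])
        (simp add: restr_signal_of state)
  qed
qed

lemma can_emit_Nil: "live_reachable Q \<Longrightarrow> x \<in> St Q \<Longrightarrow> can_emit Q x []"
  by (fastforce simp: live_reachable_def can_emit_def)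

lemma can_emit_E_l_eq:
  assumes "can_emit Q x s" and "length s \<le> l" and "E_l Q l x = E_l Q l z"
  shows "can_emit Q z s"
proof -
  obtain \<mu> \<nu> \<xi> t where run: "(\<mu>, \<nu>, \<xi>) \<in> full_behavior Q" "\<xi> t = x"
    and s: "\<forall>m < length s. \<nu> (t + m) = s ! m"
    using assms(1) by (auto simp: can_emit_def)
  have "map (\<lambda>m. Some (\<nu> (t + m))) [0..<l] \<in> E_l Q l x"
    unfolding E_l_iff using run by blast
  then have "map (\<lambda>m. Some (\<nu> (t + m))) [0..<l] \<in> E_l Q l z"
    using assms(3) by simp
  then obtain \<mu>' \<nu>' \<xi>' k where run': "(\<mu>', \<nu>', \<xi>') \<in> full_behavior Q" "\<xi>' k = z"
    and eq: "map (\<lambda>m. Some (\<nu> (t + m))) [0..<l] = map (\<lambda>m. Some (\<nu>' (k + m))) [0..<l]"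
    unfolding E_l_iff by blast
  have "\<nu>' (k + m) = s ! m" if "m < length s" for m
  proof -
    have "m < l" using that assms(2) by simp
    then have "Some (\<nu> (t + m)) = Some (\<nu>' (k + m))"
      using arg_cong[OF eq, of "\<lambda>xs. xs ! m"] by simp
    then show ?thesis using that s by simp
  qed
  with run' show ?thesis unfolding can_emit_def by blast
qed

definition splice :: "nat \<Rightarrow> (nat \<Rightarrow> 'a) \<Rightarrow> 'a \<Rightarrow> (nat \<Rightarrow> 'a) \<Rightarrow> nat \<Rightarrow> nat \<Rightarrow> 'a" where
  "splice t f c g j n = (if n < t then f n else if n = t then c else g (n - Suc t + j))"

lemma full_behavior_splice:
  assumes A: "(\<mu>A, \<nu>A, \<xi>A) \<in> full_behavior Q" "\<xi>A t = x"
    and B: "(\<mu>B, \<nu>B, \<xi>B) \<in> full_behavior Q" "\<xi>B j = x'"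
    and tr: "(x, u, y, x') \<in> Tr Q" "u \<in> Inp Q" "y \<in> Out Q"
  shows "(splice t \<mu>A u \<mu>B j, splice t \<nu>A y \<nu>B j, splice t \<xi>A x \<xi>B j) \<in> full_behavior Q"
proof -
  have stepA: "(\<xi>A k, \<mu>A k, \<nu>A k, \<xi>A (Suc k)) \<in> Tr Q"
    and stepB: "(\<xi>B k, \<mu>B k, \<nu>B k, \<xi>B (Suc k)) \<in> Tr Q" for k
    using A(1) B(1) by (auto simp: full_behavior_def)
  have "(splice t \<xi>A x \<xi>B j k, splice t \<mu>A u \<mu>B j k, splice t \<nu>A y \<nu>B j k,
      splice t \<xi>A x \<xi>B j (Suc k)) \<in> Tr Q" for k
  proof -
    consider "Suc k < t" | "Suc k = t" | "k = t" | "t < k" by linarith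
    then show ?thesis
    proof cases
      case 4
      then have "Suc k - Suc t + j = Suc (k - Suc t + j)" by simp
      with 4 show ?thesis using stepB by (simp add: splice_def)
    qed (use stepA A(2) B(2) tr(1) in \<open>auto simp: splice_def\<close>)
  qed
  moreover have "splice t \<xi>A x \<xi>B j 0 \<in> Init Q"
    using A by (auto simp: full_behavior_def splice_def)
  ultimately show ?thesis
    using A B tr by (auto simp: full_behavior_def splice_def)
qed

lemma can_emit_Cons:
  assumes "is_state_machine Q" and "live_reachable Q"
    and "x \<in> St Q" and tr: "(x, u, y, x') \<in> Tr Q" and "can_emit Q x' s"
  shows "can_emit Q x (y # s)"
proof -
  obtain \<mu>A \<nu>A \<xi>A t where A: "(\<mu>A, \<nu>A, \<xi>A) \<in> full_behavior Q" "\<xi>A t = x"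
    using assms(2,3) unfolding live_reachable_def by blast
  obtain \<mu>B \<nu>B \<xi>B j where B: "(\<mu>B, \<nu>B, \<xi>B) \<in> full_behavior Q" "\<xi>B j = x'"
    and s: "\<forall>m < length s. \<nu>B (j + m) = s ! m"
    using assms(5) unfolding can_emit_def by blast
  have "u \<in> Inp Q" "y \<in> Out Q"
    using assms(1) tr by (auto simp: is_state_machine_def)
  note run = full_behavior_splice[OF A B tr this]
  have "splice t \<nu>A y \<nu>B j (t + m) = (y # s) ! m" if "m < length (y # s)" for m
    using that s by (cases m) (auto simp: splice_def add.commute)
  moreover have "splice t \<xi>A x \<xi>B j t = x"
    by (simp add: splice_def)
  ultimately show ?thesis
    using run unfolding can_emit_def by blast
qed

lemma can_emit_Init_run:
  assumes "x \<in> Init Q" and "can_emit Q x s"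
  obtains \<mu> \<nu> \<xi> where "(\<mu>, \<nu>, \<xi>) \<in> full_behavior Q" and "\<forall>m < length s. \<nu> m = s ! m"
proof -
  obtain \<mu> \<nu> \<xi> t where run: "(\<mu>, \<nu>, \<xi>) \<in> full_behavior Q" "\<xi> t = x"
    and s: "\<forall>m < length s. \<nu> (t + m) = s ! m"
    using assms(2) unfolding can_emit_def by blast
  have "(\<lambda>n. \<mu> (t + n), \<lambda>n. \<nu> (t + n), \<lambda>n. \<xi> (t + n)) \<in> full_behavior Q"
    using run assms(1) by (auto simp: full_behavior_def)
  with s show thesis using that by blast
qed

lemma can_emit_in_Pi_l:
  assumes "can_emit Q x s" and "s \<noteq> []"
  shows "map Some s \<in> Pi_l (length s) (behavior Q)"
proof -
  obtain \<mu> \<nu> \<xi> t where run: "(\<mu>, \<nu>, \<xi>) \<in> full_behavior Q"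
    and s: "\<forall>m < length s. \<nu> (t + m) = s ! m"
    using assms(1) unfolding can_emit_def by blast
  have beh: "signal_of \<nu> \<in> behavior Q"
    using run behavior_iff by blast
  have "map Some s = map (\<lambda>m. Some (\<nu> (t + m))) [0..<length s]"
    by (rule nth_equalityI) (use s in auto)
  also have "\<dots> = restr (signal_of \<nu>) (int t) (int t + (int (length s) - 1))"
    by (rule restr_signal_of[symmetric])
  also have "\<dots> = restr (signal_of \<nu>) (int (t + length s - 1) - int (length s) + 1)
      (int (t + length s - 1))"
    using assms(2) by (cases s) simp_all
  finally have "map Some s \<in> restr_set (behavior Q) (int (t + length s - 1) - int (length s) + 1)
      (int (t + length s - 1))"
    unfolding restr_set_def using beh by (rule image_eqI)
  then show ?thesis
    unfolding Pi_l_def by blast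
qed

lemma quotient_run_step:
  assumes "is_state_machine Q" and "live_reachable Q"
    and run: "(\<mu>, \<nu>, \<xi>h) \<in> full_behavior (quotient_sm Q l)"
    and next_emits: "\<And>x. x \<in> St Q \<Longrightarrow> \<xi>h (Suc i) = E_l Q l x \<Longrightarrow> can_emit Q x s"
  shows "\<exists>x \<in> St Q. \<xi>h i = E_l Q l x \<and> can_emit Q x (\<nu> i # s)"
proof -
  have "\<forall>k. \<exists>x \<in> St Q. \<exists>x' \<in> St Q. \<xi>h k = E_l Q l x \<and> \<xi>h (Suc k) = E_l Q l x' \<and>
      (x, \<mu> k, \<nu> k, x') \<in> Tr Q"
    using run unfolding full_behavior_def quotient_sm_def by auto
  then obtain x x' where "x \<in> St Q" "\<xi>h i = E_l Q l x" "\<xi>h (Suc i) = E_l Q l x'"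
    "x' \<in> St Q" "(x, \<mu> i, \<nu> i, x') \<in> Tr Q"
    by blast
  then show ?thesis
    using can_emit_Cons[OF assms(1,2)] next_emits by blast
qed

lemma quotient_run_window:
  assumes "is_state_machine Q" and "live_reachable Q"
    and run: "(\<mu>, \<nu>, \<xi>h) \<in> full_behavior (quotient_sm Q l)"
    and "n \<le> l" and "x \<in> St Q" and "\<xi>h i = E_l Q l x"
  shows "can_emit Q x (map (\<lambda>m. \<nu> (i + m)) [0..<n])"
  using assms(4-6)
proof (induction n arbitrary: i x)
  case 0
  then show ?case using can_emit_Nil assms(2) by simp
next
  case (Suc n)
  have window: "map (\<lambda>m. \<nu> (i + m)) [0..<Suc n] = \<nu> i # map (\<lambda>m. \<nu> (Suc i + m)) [0..<n]"
    by (simp add: map_upt_Suc del: upt_Suc)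
  have next_emits: "\<And>x'. x' \<in> St Q \<Longrightarrow> \<xi>h (Suc i) = E_l Q l x' \<Longrightarrow>
      can_emit Q x' (map (\<lambda>m. \<nu> (Suc i + m)) [0..<n])"
    by (rule Suc.IH) (use Suc.prems in simp_all)
  obtain x' where "\<xi>h i = E_l Q l x'"
    and "can_emit Q x' (\<nu> i # map (\<lambda>m. \<nu> (Suc i + m)) [0..<n])"
    using quotient_run_step[OF assms(1-3) next_emits] by blast
  with window show ?case
    using can_emit_E_l_eq[of Q x' _ l x] Suc.prems by simp
qed

lemma quotient_run_window_in_Pi_l:
  assumes "is_state_machine Q" and "live_reachable Q"
    and run: "(\<mu>, \<nu>, \<xi>h) \<in> full_behavior (quotient_sm Q l)"
  shows "map (\<lambda>m. Some (\<nu> (i + m))) [0..<Suc l] \<in> Pi_l (Suc l) (behavior Q)"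
proof -
  have "map (\<lambda>m. \<nu> (i + m)) [0..<Suc l] = \<nu> i # map (\<lambda>m. \<nu> (Suc i + m)) [0..<l]"
    by (simp add: map_upt_Suc del: upt_Suc)
  moreover obtain x where "can_emit Q x (\<nu> i # map (\<lambda>m. \<nu> (Suc i + m)) [0..<l])"
    using quotient_run_step[OF assms quotient_run_window[OF assms order.refl]] by blast
  ultimately have "can_emit Q x (map (\<lambda>m. \<nu> (i + m)) [0..<Suc l])"
    by simp
  from can_emit_in_Pi_l[OF this] show ?thesis
    by (simp add: comp_def)
qed

lemma quotient_run_initial_prefix:
  assumes sm: "is_state_machine Q" and "live_reachable Q"
    and run: "(\<mu>, \<nu>, \<xi>h) \<in> full_behavior (quotient_sm Q l)"
  obtains \<mu>0 \<nu>0 \<xi>0 where "(\<mu>0, \<nu>0, \<xi>0) \<in> full_behavior Q" and "\<forall>m < l. \<nu>0 m = \<nu> m"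
proof -
  obtain x0 where x0: "x0 \<in> Init Q" and "\<xi>h 0 = E_l Q l x0"
    using run by (auto simp: full_behavior_def quotient_sm_def)
  moreover have "x0 \<in> St Q"
    using sm x0 by (auto simp: is_state_machine_def)
  ultimately have "can_emit Q x0 (map (\<lambda>m. \<nu> (0 + m)) [0..<l])"
    using quotient_run_window[OF assms order.refl] by blast
  with x0 obtain \<mu>0 \<nu>0 \<xi>0 where "(\<mu>0, \<nu>0, \<xi>0) \<in> full_behavior Q"
    and "\<forall>m < length (map (\<lambda>m. \<nu> (0 + m)) [0..<l]). \<nu>0 m = map (\<lambda>m. \<nu> (0 + m)) [0..<l] ! m"
    by (rule can_emit_Init_run)
  then show thesis
    by (intro that) auto
qed

lemma restr_set_subset_Pi_l: "restr_set B (int k - int n + 1) (int k) \<subseteq> Pi_l n B"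
  unfolding Pi_l_def by blast

lemma signal_of_in_salca:
  assumes "1 \<le> l" and out: "\<forall>k. \<nu> k \<in> Out Q"
    and run0: "(\<mu>0, \<nu>0, \<xi>0) \<in> full_behavior Q" and prefix: "\<forall>m < l. \<nu>0 m = \<nu> m"
    and windows: "\<And>i. map (\<lambda>m. Some (\<nu> (i + m))) [0..<Suc l] \<in> Pi_l (Suc l) (behavior Q)"
  shows "signal_of \<nu> \<in> salca Q l"
proof -
  have prefix_restr: "restr (signal_of \<nu>) a c \<in> restr_set (behavior Q) a c" if "c < int l" for a c
  proof -
    have "restr (signal_of \<nu>) a c = restr (signal_of \<nu>0) a c"
      by (rule restr_cong) (use prefix that in \<open>auto simp: signal_of_def\<close>)
    moreover have "signal_of \<nu>0 \<in> behavior Q"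
      using run0 behavior_iff by blast
    ultimately show ?thesis
      unfolding restr_set_def by (rule image_eqI)
  qed
  have "restr (signal_of \<nu>) (int k - int l) (int k) \<in> Pi_l (Suc l) (behavior Q)" for k
  proof (cases "k < l")
    case True
    have eq: "int k - int (Suc l) + 1 = int k - int l"
      by simp
    show ?thesis
      using prefix_restr[of "int k"] True restr_set_subset_Pi_l[of "behavior Q" k "Suc l", unfolded eq]
      by auto
  next
    case False
    then have "restr (signal_of \<nu>) (int k - int l) (int k) =
        restr (signal_of \<nu>) (int (k - l)) (int (k - l) + (int (Suc l) - 1))"
      by (simp add: of_nat_diff)
    then show ?thesis
      using windows[of "k - l"] by (simp only: restr_signal_of)
  qed
  moreover have "restr (signal_of \<nu>) (- int l) 0 \<in> restr_set (behavior Q) (- int l) 0"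
    using prefix_restr assms(1) by simp
  moreover have "\<forall>k < 0. signal_of \<nu> k = None" and "\<forall>k \<ge> 0. signal_of \<nu> k \<in> Some ` Out Q"
    using out by (simp_all add: signal_of_def)
  ultimately show ?thesis
    unfolding salca_def by simp
qed

theorem theorem8:
  fixes Q :: "('x, 'u, 'y) state_machine" and l :: nat
  assumes "standing_assumptions Q" and "l \<ge> 1"
  shows "behavior (quotient_sm Q l) \<subseteq> salca Q l"
proof
  fix w assume "w \<in> behavior (quotient_sm Q l)"
  then obtain \<mu> \<nu> \<xi>h where run: "(\<mu>, \<nu>, \<xi>h) \<in> full_behavior (quotient_sm Q l)"
    and w: "w = signal_of \<nu>"
    unfolding behavior_iff by blast
  have sm: "is_state_machine Q" and lr: "live_reachable Q"
    using assms(1) by (auto simp: standing_assumptions_def)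
  obtain \<mu>0 \<nu>0 \<xi>0 where "(\<mu>0, \<nu>0, \<xi>0) \<in> full_behavior Q" and "\<forall>m < l. \<nu>0 m = \<nu> m"
    using quotient_run_initial_prefix[OF sm lr run] .
  moreover have "\<forall>k. \<nu> k \<in> Out Q"
    using run by (auto simp: full_behavior_def quotient_sm_def)
  ultimately show "w \<in> salca Q l"
    unfolding w using signal_of_in_salca assms(2) quotient_run_window_in_Pi_l[OF sm lr run] by blast
qed

end
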